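(* Let $G=(V,E)$ be a $k$-uniform hypergraph with $k\ge 3$. Let $U$ be a supervertex of $G$ with degree $d$ and $|U|\ge 2$. Let $\lambda\neq d$ be a Laplacian H-eigenvalue of $G$ and $\mathbf{x}$ a corresponding Laplacian H-eigenvector. Then for all $i,j\in U$ we have $|x_i|=|x_j|$; if moreover $k$ is odd, then $x_i=x_j$.
   Context: A $k$-uniform hypergraph $G=(V,E)$ has vertex set $V=[n]$ and a set $E$ of $k$-element subsets of $V$. For $i\in V$, $E_i$ is the set of edges containing $i$ and $d_i=|E_i|$ is its degree. For $i\in V$, the set $U=\{j\in V: E_j=E_i\}$ is called a supervertex; all its vertices have the same degree, called the degree of the supervertex. A Laplacian H-eigenvalue of $G$ is a real $\lambda$ for which there exists $\mathbf{x}\in\mathbb{R}^n\setminus\{0\}$ (a Laplacian H-eigenvector) with $\lambda x_i^{k-1}=d_ix_i^{k-1}-\sum_{e\in E_i}\prod_{j\in e\setminus\{i\}}x_j$ for all $i\in[n]$; equivalently, an H-eigenvalue of the Laplacian tensor $\mathcal{L}=\mathcal{D}-\mathcal{A}$, where $\mathcal{A}$ has entries $1/(k-1)!$ at $(i_1,\ldots,i_k)$ with $\{i_1,\ldots,i_k\}\in E$ and $0$ otherwise, and $\mathcal{D}$ is diagonal with entries $d_i$. *)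

theory Defs
  imports "HOL-Analysis.Analysis"
begin

definition uniform_hypergraph :: "nat \<Rightarrow> nat \<Rightarrow> nat set set \<Rightarrow> bool" where
  "uniform_hypergraph n k E \<longleftrightarrow> (\<forall>e\<in>E. e \<subseteq> {1..n} \<and> card e = k)"

definition edges_at :: "nat set set \<Rightarrow> nat \<Rightarrow> nat set set" where
  "edges_at E i = {e \<in> E. i \<in> e}"

definition hdegree :: "nat set set \<Rightarrow> nat \<Rightarrow> nat" where
  "hdegree E i = card (edges_at E i)"

definition supervertex_of :: "nat \<Rightarrow> nat set set \<Rightarrow> nat \<Rightarrow> nat set" where
  "supervertex_of n E i = {j \<in> {1..n}. edges_at E j = edges_at E i}"

definition is_supervertex :: "nat \<Rightarrow> nat set set \<Rightarrow> nat set \<Rightarrow> bool" where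
  "is_supervertex n E U \<longleftrightarrow> (\<exists>i\<in>{1..n}. U = supervertex_of n E i)"

definition lap_H_eigenpair :: "nat \<Rightarrow> nat \<Rightarrow> nat set set \<Rightarrow> real \<Rightarrow> (nat \<Rightarrow> real) \<Rightarrow> bool" where
  "lap_H_eigenpair n k E lam x \<longleftrightarrow>
     (\<exists>i\<in>{1..n}. x i \<noteq> 0) \<and>
     (\<forall>i\<in>{1..n}. lam * x i ^ (k - 1) =
        real (hdegree E i) * x i ^ (k - 1) - (\<Sum>e\<in>edges_at E i. \<Prod>j\<in>e - {i}. x j))"

definition lap_H_eigenvalue :: "nat \<Rightarrow> nat \<Rightarrow> nat set set \<Rightarrow> real \<Rightarrow> bool" where
  "lap_H_eigenvalue n k E lam \<longleftrightarrow> (\<exists>x. lap_H_eigenpair n k E lam x)"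

end

theory Submission
  imports Defs
begin

text \<open>Two distinct vertices i, j of a supervertex lie in exactly the same edges, so every
  summand of the eigenequation at i contains the factor x_j, and vice versa, with the common
  cofactor Q = sum over e of the product of x_l over l in e - {i, j}. With c = d - lambda,
  nonzero by assumption, this gives c x_i^(k-1) = x_j Q and c x_j^(k-1) = x_i Q; multiplying
  by x_i resp. x_j yields x_i^k = x_j^k, hence |x_i| = |x_j|, and x_i = x_j for odd k.\<close>

lemma supervertex_edges_at_eq:
  assumes "is_supervertex n E U" and "i \<in> U" and "j \<in> U"
  shows "i \<in> {1..n}" and "edges_at E i = edges_at E j"
  using assms unfolding is_supervertex_def supervertex_of_def by auto

lemma uniform_hypergraph_finite_edge:
  assumes "uniform_hypergraph n k E" and "e \<in> E"
  shows "finite e"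
  using assms unfolding uniform_hypergraph_def by (auto intro: finite_subset)

lemma sum_prod_Diff_factor_out:
  fixes x :: "'a \<Rightarrow> 'b::comm_semiring_1"
  assumes "\<And>e. e \<in> F \<Longrightarrow> finite e \<and> i \<in> e \<and> j \<in> e" and "i \<noteq> j"
  shows "(\<Sum>e\<in>F. \<Prod>l\<in>e - {i}. x l) = x j * (\<Sum>e\<in>F. \<Prod>l\<in>e - {i, j}. x l)"
proof -
  have "(\<Prod>l\<in>e - {i}. x l) = x j * (\<Prod>l\<in>e - {i, j}. x l)" if "e \<in> F" for e
  proof -
    have "j \<in> e - {i}" and "finite (e - {i})" using assms that by auto
    moreover have "e - {i} - {j} = e - {i, j}" by blast
    ultimately show ?thesis by (metis prod.remove)
  qed
  then show ?thesis by (simp add: sum_distrib_left)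
qed

lemma lap_H_eigenpair_twin_equation:
  assumes "uniform_hypergraph n k E" and "lap_H_eigenpair n k E lam x"
    and "i \<in> {1..n}" and "i \<noteq> j" and "edges_at E i = edges_at E j"
  shows "(real (hdegree E i) - lam) * x i ^ (k - 1)
           = x j * (\<Sum>e\<in>edges_at E i. \<Prod>l\<in>e - {i, j}. x l)"
proof -
  have "finite e \<and> i \<in> e \<and> j \<in> e" if "e \<in> edges_at E i" for e
  proof -
    have "e \<in> edges_at E j" using that assms(5) by simp
    then show ?thesis
      using that uniform_hypergraph_finite_edge[OF assms(1)] by (simp add: edges_at_def)
  qed
  then have "(\<Sum>e\<in>edges_at E i. \<Prod>l\<in>e - {i}. x l)
               = x j * (\<Sum>e\<in>edges_at E i. \<Prod>l\<in>e - {i, j}. x l)"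
    by (rule sum_prod_Diff_factor_out[OF _ assms(4)])
  moreover have "lam * x i ^ (k - 1)
      = real (hdegree E i) * x i ^ (k - 1) - (\<Sum>e\<in>edges_at E i. \<Prod>l\<in>e - {i}. x l)"
    using assms(2,3) unfolding lap_H_eigenpair_def by (elim conjE bspec)
  ultimately show ?thesis by (simp add: left_diff_distrib)
qed

lemma power_eq_of_cross_relation:
  fixes a b c q :: "'a::idom"
  assumes "c \<noteq> 0" and "0 < k"
    and "c * a ^ (k - 1) = b * q" and "c * b ^ (k - 1) = a * q"
  shows "a ^ k = b ^ k"
proof -
  have k: "k = Suc (k - 1)" using assms(2) by simp
  have "c * a ^ k = a * (c * a ^ (k - 1))" by (subst k) (simp add: algebra_simps)
  also have "\<dots> = b * (c * b ^ (k - 1))" using assms(3,4) by (simp add: algebra_simps)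
  also have "\<dots> = c * b ^ k" by (subst (2) k) (simp add: algebra_simps)
  finally show ?thesis using assms(1) by simp
qed

lemma real_abs_eq_of_power_eq:
  fixes a b :: real
  assumes "a ^ k = b ^ k" and "0 < k"
  shows "\<bar>a\<bar> = \<bar>b\<bar>"
  using assms by (metis abs_ge_zero power_abs power_eq_iff_eq_base)

lemma real_eq_of_odd_power_eq:
  fixes a b :: real
  assumes "a ^ k = b ^ k" and "odd k"
  shows "a = b"
  using assms by (metis odd_real_root_power_cancel)

theorem theorem6p1:
  fixes n k d :: nat and E :: "nat set set" and U :: "nat set"
    and lam :: real and x :: "nat \<Rightarrow> real"
  assumes "uniform_hypergraph n k E"
    and "k \<ge> 3"
    and "is_supervertex n E U"
    and "\<forall>i\<in>U. hdegree E i = d"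
    and "card U \<ge> 2"
    and "lam \<noteq> real d"
    and "lap_H_eigenpair n k E lam x"
  shows "(\<forall>i\<in>U. \<forall>j\<in>U. \<bar>x i\<bar> = \<bar>x j\<bar>) \<and>
         (odd k \<longrightarrow> (\<forall>i\<in>U. \<forall>j\<in>U. x i = x j))"
proof -
  have power_eq: "x i ^ k = x j ^ k" if "i \<in> U" and "j \<in> U" for i j
  proof (cases "i = j")
    case False
    have edges: "edges_at E i = edges_at E j" and i: "i \<in> {1..n}" and j: "j \<in> {1..n}"
      using supervertex_edges_at_eq[OF assms(3)] that by blast+
    define Q where "Q = (\<Sum>e\<in>edges_at E i. \<Prod>l\<in>e - {i, j}. x l)"
    have Q_sym: "(\<Sum>e\<in>edges_at E j. \<Prod>l\<in>e - {j, i}. x l) = Q"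
      unfolding Q_def edges by (simp only: insert_commute)
    have "hdegree E i = d" "hdegree E j = d" using assms(4) that by auto
    then have "(real d - lam) * x i ^ (k - 1) = x j * Q"
      and "(real d - lam) * x j ^ (k - 1) = x i * Q"
      using lap_H_eigenpair_twin_equation[OF assms(1,7) i False edges]
        lap_H_eigenpair_twin_equation[OF assms(1,7) j not_sym[OF False] edges[symmetric]]
      unfolding Q_def[symmetric] Q_sym by simp_all
    moreover have "real d - lam \<noteq> 0" and "0 < k" using assms(2,6) by auto
    ultimately show ?thesis by (rule power_eq_of_cross_relation[rotated 2])
  qed simp
  have "0 < k" using assms(2) by simp
  then show ?thesis
    using power_eq real_abs_eq_of_power_eq real_eq_of_odd_power_eq by blast
qed

end
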